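(* Let $A_1,\dots,A_n$ ($n\ge 3$) be distinct points of a difference cograph such that $\mathcal{C}(A_1,A_2)=\mathcal{C}(A_2,A_3)=\dots=\mathcal{C}(A_{n-1},A_n)$. If $n$ is odd then $A_1+A_n=2A_{(n+1)/2}$; if $n$ is even then $A_1+A_n=A_{n/2}+A_{n/2+1}$. (In particular, for a chain $A,B,C$ one has $A+C=2B$, and for a chain $A,B,C,D$ one has $A+D=B+C$.)
   Context: A difference cograph has as points distinct elements either of $\mathbb{Z}$, with edge $\mathcal{C}(P,Q)=|P-Q|$, or of $\mathbb{Z}_m$ for some $m$, with edge $\mathcal{C}(P,Q)=\min|p-q|$ taken over integers $p\in P$, $q\in Q$ (the cosets); sums of points are computed in $\mathbb{Z}$ or $\mathbb{Z}_m$ respectively. *)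

theory Defs
  imports Main
begin

text \<open>The parameter m :: nat selects the cograph:
  m = 0 is the cograph on the integers, m \<ge> 1 is the cograph on Z_m.
  A point of Z_m is represented by any integer representative of its coset;
  two representatives denote the same point iff they agree mod m
  (for m = 0 this is plain equality, since a mod 0 = a).\<close>

definition same_pt :: "nat \<Rightarrow> int \<Rightarrow> int \<Rightarrow> bool" where
  "same_pt m P Q \<longleftrightarrow> P mod int m = Q mod int m"

definition cdist :: "nat \<Rightarrow> int \<Rightarrow> int \<Rightarrow> int" where
  "cdist m P Q =
     (if m = 0 then \<bar>P - Q\<bar>
      else Inf {\<bar>p - q\<bar> | p q. p mod int m = P mod int m \<and> q mod int m = Q mod int m})"

end

theory Submission
  imports Defs "HOL-Number_Theory.Cong"
begin

text \<open>The minimum defining an edge is attained, so an edge of value c moves a point by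
  \<open>+c\<close> or \<open>-c\<close> modulo m.  The first step of the chain fixes a direction e, and each
  later step must repeat it, since reversing would land on the point before last, contradicting
  distinctness.  Hence \<open>A\<^sub>j = A\<^sub>1 + (j - 1) e\<close> modulo m, and in an arithmetic
  progression terms with equal index sums have equal sums.\<close>

lemma int_cInf_mem:
  fixes X :: "int set"
  assumes "X \<noteq> {}" "bdd_below X"
  shows "Inf X \<in> X"
proof -
  obtain x where x: "x \<in> X" "x < Inf X + 1"
    using cInf_less_iff[OF assms, of "Inf X + 1"] by auto
  moreover have "Inf X \<le> x"
    using x(1) assms(2) by (rule cInf_lower)
  ultimately have "x = Inf X" by simp
  with x(1) show ?thesis by simp
qed

lemma cdist_attained:
  assumes "m \<noteq> 0"
  obtains p q where "[p = P] (mod int m)" "[q = Q] (mod int m)" "cdist m P Q = \<bar>p - q\<bar>"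
proof -
  let ?S = "{\<bar>p - q\<bar> | p q. p mod int m = P mod int m \<and> q mod int m = Q mod int m}"
  have "\<bar>P - Q\<bar> \<in> ?S"
    by blast
  moreover have "bdd_below ?S"
    by (rule bdd_belowI[of _ 0]) auto
  ultimately have "Inf ?S \<in> ?S"
    by (intro int_cInf_mem) auto
  then obtain p q where "p mod int m = P mod int m" "q mod int m = Q mod int m"
    and "Inf ?S = \<bar>p - q\<bar>"
    by blast
  with assms show ?thesis
    by (intro that[of p q]) (simp_all add: cdist_def cong_def)
qed

lemma cdist_step_cong:
  "[Q = P + cdist m P Q] (mod int m) \<or> [Q = P - cdist m P Q] (mod int m)"
proof (cases "m = 0")
  case True
  then show ?thesis by (auto simp: cdist_def cong_def abs_if)
next
  case False
  then obtain p q where pq: "[p = P] (mod int m)" "[q = Q] (mod int m)"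
    and c: "cdist m P Q = \<bar>p - q\<bar>"
    by (rule cdist_attained)
  have "[Q = q] (mod int m)"
    using pq(2) by (rule cong_sym)
  also have "q = p + (q - p)"
    by simp
  also have "[p + (q - p) = P + (q - p)] (mod int m)"
    using pq(1) by (rule cong_add) simp
  finally have shift: "[Q = P + (q - p)] (mod int m)" .
  show ?thesis
  proof (cases "p \<le> q")
    case True
    then show ?thesis
      using c shift by simp
  next
    case False
    then have "P + (q - p) = P - cdist m P Q"
      using c by simp
    then show ?thesis
      using shift by simp
  qed
qed

lemma non_backtracking_walk_cong_progression:
  fixes A :: "nat \<Rightarrow> int" and M e :: int
  assumes first_step: "[A 2 = A 1 + e] (mod M)"
    and steps: "\<And>i. 1 \<le> i \<Longrightarrow> i < n \<Longrightarrow>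
                  [A (i + 1) = A i + e] (mod M) \<or> [A (i + 1) = A i - e] (mod M)"
    and no_backtrack: "\<And>i. 2 \<le> i \<Longrightarrow> i < n \<Longrightarrow> \<not> [A (i + 1) = A (i - 1)] (mod M)"
    and "1 \<le> j" "j \<le> n"
  shows "[A j = A 1 + int (j - 1) * e] (mod M)"
  using assms(4,5)
proof (induction j rule: less_induct)
  case (less j)
  show ?case
  proof (cases "j \<le> 2")
    case True
    then have "j = 1 \<or> j = 2"
      using less.prems by auto
    then show ?thesis
      using first_step by auto
  next
    case False
    define i where "i = j - 1"
    have j: "j = i + 1" "2 \<le> i"
      using False by (auto simp: i_def)
    have prev: "[A i = A 1 + int (i - 1) * e] (mod M)"
      using j less by (intro less.IH) auto
    have prev2: "[A (i - 1) = A 1 + int (i - 2) * e] (mod M)"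
      using j less by (auto intro: less.IH[of "i - 1", simplified])
    have forward: "[A (i + 1) = A i + e] (mod M)"
    proof (rule ccontr)
      assume "\<not> [A (i + 1) = A i + e] (mod M)"
      then have "[A (i + 1) = A i - e] (mod M)"
        using steps[of i] j less.prems by auto
      also have "[A i - e = A 1 + int (i - 1) * e - e] (mod M)"
        using prev by (rule cong_diff) simp
      also have "A 1 + int (i - 1) * e - e = A 1 + int (i - 2) * e"
        using j by (simp add: of_nat_diff algebra_simps)
      also have "[A 1 + int (i - 2) * e = A (i - 1)] (mod M)"
        using prev2 by (rule cong_sym)
      finally show False
        using no_backtrack[of i] j less.prems by simp
    qed
    have "[A j = A i + e] (mod M)"
      using forward j by simp
    also have "[A i + e = A 1 + int (i - 1) * e + e] (mod M)"
      using prev by (rule cong_add) simp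
    also have "A 1 + int (i - 1) * e + e = A 1 + int (j - 1) * e"
      using j by (simp add: of_nat_diff algebra_simps)
    finally show ?thesis .
  qed
qed

lemma cong_progression_sum:
  fixes A :: "nat \<Rightarrow> int" and M a e :: int
  assumes progression: "\<And>j. 1 \<le> j \<Longrightarrow> j \<le> n \<Longrightarrow> [A j = a + int (j - 1) * e] (mod M)"
    and "i + j = k + l" "1 \<le> i" "1 \<le> j" "1 \<le> k" "1 \<le> l" "i \<le> n" "j \<le> n" "k \<le> n" "l \<le> n"
  shows "[A i + A j = A k + A l] (mod M)"
proof -
  have "[A i + A j = (a + int (i - 1) * e) + (a + int (j - 1) * e)] (mod M)"
    using assms by (intro cong_add progression)
  also have "(a + int (i - 1) * e) + (a + int (j - 1) * e) = 2 * a + (int (i - 1) + int (j - 1)) * e"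
    by (simp add: algebra_simps)
  also have "int (i - 1) + int (j - 1) = int (k - 1) + int (l - 1)"
    using assms(2-6) by linarith
  also have "2 * a + (int (k - 1) + int (l - 1)) * e
             = (a + int (k - 1) * e) + (a + int (l - 1) * e)"
    by (simp add: algebra_simps)
  also have "[(a + int (k - 1) * e) + (a + int (l - 1) * e) = A k + A l] (mod M)"
    using assms by (intro cong_add progression[THEN cong_sym])
  finally show ?thesis .
qed

lemma cong_progression_ends_midpoint:
  fixes A :: "nat \<Rightarrow> int" and M a e :: int
  assumes progression: "\<And>j. 1 \<le> j \<Longrightarrow> j \<le> n \<Longrightarrow> [A j = a + int (j - 1) * e] (mod M)"
    and "2 \<le> n"
  shows "odd n \<Longrightarrow> [A 1 + A n = 2 * A ((n + 1) div 2)] (mod M)"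
    and "even n \<Longrightarrow> [A 1 + A n = A (n div 2) + A (n div 2 + 1)] (mod M)"
proof -
  have sym_sum: "[A 1 + A n = A i + A j] (mod M)"
    if "i + j = n + 1" "1 \<le> i" "1 \<le> j" "i \<le> n" "j \<le> n" for i j
    using that assms(2) by (intro cong_progression_sum[OF progression]) auto
  show "[A 1 + A n = 2 * A ((n + 1) div 2)] (mod M)" if "odd n"
  proof -
    obtain k where k: "n = 2 * k + 1"
      using \<open>odd n\<close> by (rule oddE)
    have "[A 1 + A n = A (k + 1) + A (k + 1)] (mod M)"
      using k by (intro sym_sum) auto
    moreover have "(n + 1) div 2 = k + 1"
      using k by simp
    ultimately show ?thesis
      by (simp only: mult_2)
  qed
  show "[A 1 + A n = A (n div 2) + A (n div 2 + 1)] (mod M)" if "even n"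
  proof -
    obtain k where k: "n = 2 * k"
      using \<open>even n\<close> by (rule evenE)
    have "[A 1 + A n = A k + A (k + 1)] (mod M)"
      using k assms(2) by (intro sym_sum) auto
    moreover have "n div 2 = k"
      using k by simp
    ultimately show ?thesis
      by (simp only:)
  qed
qed

lemma equal_edge_chain_cong_progression:
  fixes A :: "nat \<Rightarrow> int"
  assumes "2 \<le> n"
    and distinct: "\<And>i j. 1 \<le> i \<Longrightarrow> i < j \<Longrightarrow> j \<le> n \<Longrightarrow> \<not> same_pt m (A i) (A j)"
    and equal_edges: "\<And>i. 1 \<le> i \<Longrightarrow> i < n \<Longrightarrow> cdist m (A i) (A (i + 1)) = cdist m (A 1) (A 2)"
  obtains e where "\<And>j. 1 \<le> j \<Longrightarrow> j \<le> n \<Longrightarrow> [A j = A 1 + int (j - 1) * e] (mod int m)"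
proof -
  define c where "c = cdist m (A 1) (A 2)"
  have steps: "[A (i + 1) = A i + c] (mod int m) \<or> [A (i + 1) = A i - c] (mod int m)"
    if "1 \<le> i" "i < n" for i
    using cdist_step_cong[of "A (i + 1)" "A i" m] equal_edges[OF that] by (simp add: c_def)
  have "[A 2 = A 1 + c] (mod int m) \<or> [A 2 = A 1 + - c] (mod int m)"
    using steps[of 1] assms(1) by (simp add: numeral_2_eq_2)
  then obtain e where e: "[A 2 = A 1 + e] (mod int m)" "e = c \<or> e = - c"
    by blast
  show ?thesis
  proof (rule that, rule non_backtracking_walk_cong_progression[OF e(1)])
    show "[A (i + 1) = A i + e] (mod int m) \<or> [A (i + 1) = A i - e] (mod int m)"
      if "1 \<le> i" "i < n" for i
      using steps[OF that] e(2) by auto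
    show "\<not> [A (i + 1) = A (i - 1)] (mod int m)" if "2 \<le> i" "i < n" for i
    proof -
      have "\<not> same_pt m (A (i - 1)) (A (i + 1))"
        using that by (intro distinct) auto
      then show ?thesis
        by (simp add: same_pt_def cong_def)
    qed
  qed
qed

theorem lemma3p2:
  fixes m :: nat and n :: nat and A :: "nat \<Rightarrow> int"
  assumes "n \<ge> 3"
    and distinct: "\<forall>i j. 1 \<le> i \<and> i < j \<and> j \<le> n \<longrightarrow> \<not> same_pt m (A i) (A j)"
    and equal_edges: "\<forall>i. 1 \<le> i \<and> i < n \<longrightarrow> cdist m (A i) (A (i + 1)) = cdist m (A 1) (A 2)"
  shows "(odd n \<longrightarrow> same_pt m (A 1 + A n) (2 * A ((n + 1) div 2)))
       \<and> (even n \<longrightarrow> same_pt m (A 1 + A n) (A (n div 2) + A (n div 2 + 1)))"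
proof -
  have "2 \<le> n"
    using assms(1) by simp
  then obtain e where progression:
      "\<And>j. 1 \<le> j \<Longrightarrow> j \<le> n \<Longrightarrow> [A j = A 1 + int (j - 1) * e] (mod int m)"
  proof (rule equal_edge_chain_cong_progression[where m = m and A = A])
    show "\<not> same_pt m (A i) (A j)" if "1 \<le> i" "i < j" "j \<le> n" for i j
      using distinct that by blast
    show "cdist m (A i) (A (i + 1)) = cdist m (A 1) (A 2)" if "1 \<le> i" "i < n" for i
      using equal_edges that by blast
  qed (rule that)
  show ?thesis
    unfolding same_pt_def cong_def[symmetric]
    using cong_progression_ends_midpoint[OF progression \<open>2 \<le> n\<close>] by blast
qed

end
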